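(* Let $q\ge2$ and let $(w_{n_k})_{k\ge1}$ be a $q$-lacunary sequence of Walsh functions. Then for every $M\ge1$ and all real numbers $a_1,\dots,a_M$, the functions $R_M=\sum_{k=1}^Ma_kr_k$ and $W_M=\sum_{k=1}^Ma_kw_{n_k}$ have the same distribution function on $[0,1]$ (i.e. $m(\{|R_M|>\lambda\})=m(\{|W_M|>\lambda\})$ for all $\lambda>0$).
   Context: $m$ is Lebesgue measure on $[0,1]$. Rademacher functions $r_k(t)=\mathrm{sign}\sin(2^k\pi t)$, $k\ge1$. Walsh functions (Paley numbering): $w_0=1$ and for $k=a_12^0+\dots+a_n2^{n-1}$ with $a_i\in\{0,1\}$, $w_k=r_1^{a_1}\cdots r_n^{a_n}$. A sequence $(w_{n_k})$ is $q$-lacunary if $n_{k+1}/n_k\ge q$ for all $k\ge1$. *)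

theory Defs
  imports "HOL-Analysis.Analysis"
begin

definition rademacher :: "nat \<Rightarrow> real \<Rightarrow> real" where
  "rademacher k t = sgn (sin (2 ^ k * pi * t))"

text \<open>Walsh functions in Paley numbering: for k = sum a_i 2^(i-1),
  w_k = prod r_i^(a_i); w_0 = 1 (empty product).  Bit i (0-based) of k
  corresponds to the Rademacher function r_(i+1); bits with i >= k are zero.\<close>
definition walsh :: "nat \<Rightarrow> real \<Rightarrow> real" where
  "walsh k t = (\<Prod>i<k. if odd (k div 2 ^ i) then rademacher (Suc i) t else 1)"

definition lacunary :: "real \<Rightarrow> (nat \<Rightarrow> nat) \<Rightarrow> bool" where
  "lacunary q n \<longleftrightarrow> (\<forall>k\<ge>1. n k > 0 \<and> real (n (Suc k)) / real (n k) \<ge> q)"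

end

(* Binary expansion turns the Walsh function w_n into the product of the Rademacher functions
   r_j over the set J(n) of positions (shifted by one) of the binary digits 1 of n.  The vector
   (r_1, ..., r_H) is constant on each of the 2^H dyadic intervals of length 2^-H and takes every
   sign pattern on exactly one of them, so the measure of the set where a condition on
   r_1, ..., r_H holds is the proportion of sign vectors x in {-1,1}^H satisfying it.  Both
   distribution functions thus become proportions of sign vectors: those with Q(x_1, ..., x_M),
   and those with Q(prod over J(n_1) of x, ..., prod over J(n_M) of x).  For q >= 2 the leading
   digit of n_k strictly increases with k, so the leading position of J(n_k) lies in no earlier
   J(n_j).  Flipping the sign of that coordinate then shows, by induction on M, that every pattern
   of the M products is attained by exactly 2^(H-M) sign vectors, just like every pattern of
   x_1, ..., x_M. *)

theory Submission
  imports Defs "HOL-Library.Discrete_Functions"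
begin

definition sign_vectors :: "'a set \<Rightarrow> ('a \<Rightarrow> real) set" where
  "sign_vectors I = PiE I (\<lambda>_. {-1, 1})"

lemma finite_sign_vectors: "finite I \<Longrightarrow> finite (sign_vectors I)"
  unfolding sign_vectors_def by (simp add: finite_PiE)

lemma card_sign_vectors: "finite I \<Longrightarrow> card (sign_vectors I) = 2 ^ card I"
  unfolding sign_vectors_def by (simp add: card_PiE numeral_2_eq_2)

lemma sign_vectors_memD: "x \<in> sign_vectors I \<Longrightarrow> i \<in> I \<Longrightarrow> x i \<in> {-1, 1}"
  unfolding sign_vectors_def by (auto simp: PiE_iff)

lemma prod_sign_vector:
  assumes "x \<in> sign_vectors I" "J \<subseteq> I"
  shows "(\<Prod>i\<in>J. x i) \<in> {-1, 1}"
proof (cases "finite J")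
  case True
  then show ?thesis
    using assms(2) by (induction J rule: finite_induct) (auto dest: sign_vectors_memD[OF assms(1)])
qed simp

lemma prod_flip:
  assumes "finite J" "p \<in> J"
  shows "(\<Prod>i\<in>J. (x(p := - x p)) i) = - (\<Prod>i\<in>J. x i :: real)"
proof -
  have "(\<Prod>i\<in>J - {p}. (x(p := - x p)) i) = (\<Prod>i\<in>J - {p}. x i)"
    by (rule prod.cong) auto
  then show ?thesis
    using assms by (simp add: prod.remove[of J p])
qed

lemma sign_vectors_flip:
  "x \<in> sign_vectors I \<Longrightarrow> p \<in> I \<Longrightarrow> x(p := - x p) \<in> sign_vectors I"
  unfolding sign_vectors_def by (auto simp: PiE_iff extensional_def)

lemma card_prod_eq_neg:
  fixes A :: "('a \<Rightarrow> real) set"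
  assumes "finite J" "p \<in> J" and flip: "\<And>x. x \<in> A \<Longrightarrow> x(p := - x p) \<in> A"
  shows "card {x\<in>A. (\<Prod>i\<in>J. x i) = - c} = card {x\<in>A. (\<Prod>i\<in>J. x i) = c}"
proof (rule bij_betw_same_card)
  let ?f = "\<lambda>x. x(p := - x p)"
  have "?f (?f x) = x" for x :: "'a \<Rightarrow> real"
    by auto
  then show "bij_betw ?f {x\<in>A. (\<Prod>i\<in>J. x i) = - c} {x\<in>A. (\<Prod>i\<in>J. x i) = c}"
    using flip prod_flip[OF assms(1,2)] by (intro bij_betwI[where g = ?f]) auto
qed

lemma card_prod_level_set:
  assumes "finite A" "A \<subseteq> sign_vectors I" "J \<subseteq> I" "finite J" "p \<in> J" "c \<in> {-1, 1}"
    and flip: "\<And>x. x \<in> A \<Longrightarrow> x(p := - x p) \<in> A"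
  shows "card A = 2 * card {x\<in>A. (\<Prod>i\<in>J. x i) = c}"
proof -
  define B where "B c = {x\<in>A. (\<Prod>i\<in>J. x i) = c}" for c
  have pm: "(\<Prod>i\<in>J. x i) \<in> {-1, 1}" if "x \<in> A" for x
    using prod_sign_vector assms(2,3) that by blast
  have "A = B c \<union> B (- c)"
    using \<open>c \<in> {-1, 1}\<close> unfolding B_def by (auto dest: pm)
  moreover have "card (B c \<union> B (- c)) = card (B c) + card (B (- c))"
    using \<open>finite A\<close> \<open>c \<in> {-1, 1}\<close> by (intro card_Un_disjoint) (auto simp: B_def)
  ultimately have "card A = card (B c) + card (B (- c))"
    by simp
  also have "card (B (- c)) = card (B c)"
    unfolding B_def using assms(4,5) flip by (rule card_prod_eq_neg)
  finally show ?thesis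
    unfolding B_def by simp
qed

lemma card_triangular_fiber:
  fixes J :: "nat \<Rightarrow> 'a set" and pivot :: "nat \<Rightarrow> 'a"
  assumes "finite I"
    and sub: "\<And>k. k \<in> {1..M} \<Longrightarrow> J k \<subseteq> I"
    and pivot: "\<And>k. k \<in> {1..M} \<Longrightarrow> pivot k \<in> J k"
    and triangular: "\<And>j k. j \<in> {1..M} \<Longrightarrow> k \<in> {1..M} \<Longrightarrow> j < k \<Longrightarrow> pivot k \<notin> J j"
    and v: "\<And>k. k \<in> {1..M} \<Longrightarrow> v k \<in> {-1, 1}"
  shows "card {x\<in>sign_vectors I. \<forall>k\<in>{1..M}. (\<Prod>i\<in>J k. x i) = v k} * 2 ^ M = 2 ^ card I"
  using sub pivot triangular v
proof (induction M)
  case 0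
  then show ?case
    using card_sign_vectors[OF \<open>finite I\<close>] by simp
next
  case (Suc M)
  define A where "A = {x\<in>sign_vectors I. \<forall>k\<in>{1..M}. (\<Prod>i\<in>J k. x i) = v k}"
  define p where "p = pivot (Suc M)"
  have IH: "card A * 2 ^ M = 2 ^ card I"
    unfolding A_def using Suc.prems by (intro Suc.IH) auto
  have J: "J (Suc M) \<subseteq> I" "p \<in> J (Suc M)"
    using Suc.prems unfolding p_def by auto
  have "x(p := - x p) \<in> A" if "x \<in> A" for x
  proof -
    have "p \<notin> J k" if "k \<in> {1..M}" for k
      using Suc.prems(3)[of k "Suc M"] that unfolding p_def by auto
    then have "(\<Prod>i\<in>J k. (x(p := - x p)) i) = (\<Prod>i\<in>J k. x i)" if "k \<in> {1..M}" for k
      using that by (intro prod.cong) auto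
    moreover have "x(p := - x p) \<in> sign_vectors I"
      using \<open>x \<in> A\<close> J unfolding A_def by (intro sign_vectors_flip) auto
    ultimately show ?thesis
      using \<open>x \<in> A\<close> unfolding A_def by auto
  qed
  then have "card A = 2 * card {x\<in>A. (\<Prod>i\<in>J (Suc M). x i) = v (Suc M)}"
    using J Suc.prems(4) finite_subset[OF J(1) \<open>finite I\<close>] finite_sign_vectors[OF \<open>finite I\<close>]
    by (intro card_prod_level_set) (auto simp: A_def)
  moreover have "{x\<in>A. (\<Prod>i\<in>J (Suc M). x i) = v (Suc M)}
      = {x\<in>sign_vectors I. \<forall>k\<in>{1..Suc M}. (\<Prod>i\<in>J k. x i) = v k}"
    unfolding A_def by (auto simp: le_Suc_eq)
  ultimately show ?case
    using IH by simp
qed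

lemma card_triangular_pattern:
  fixes J :: "nat \<Rightarrow> 'a set" and pivot :: "nat \<Rightarrow> 'a"
  assumes "finite I"
    and sub: "\<And>k. k \<in> {1..M} \<Longrightarrow> J k \<subseteq> I"
    and pivot: "\<And>k. k \<in> {1..M} \<Longrightarrow> pivot k \<in> J k"
    and triangular: "\<And>j k. j \<in> {1..M} \<Longrightarrow> k \<in> {1..M} \<Longrightarrow> j < k \<Longrightarrow> pivot k \<notin> J j"
    and Q: "\<And>v v'. (\<And>k. k \<in> {1..M} \<Longrightarrow> v k = v' k) \<Longrightarrow> Q v = Q v'"
  shows "card {x\<in>sign_vectors I. Q (\<lambda>k. \<Prod>i\<in>J k. x i)} * 2 ^ M
       = 2 ^ card I * card {v\<in>sign_vectors {1..M}. Q v}"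
proof -
  let ?S = "{x\<in>sign_vectors I. Q (\<lambda>k. \<Prod>i\<in>J k. x i)}"
  let ?V = "{v\<in>sign_vectors {1..M}. Q v}"
  define \<phi> where "\<phi> x = restrict (\<lambda>k. \<Prod>i\<in>J k. x i) {1..M}" for x :: "'a \<Rightarrow> real"
  have Q\<phi>: "Q (\<phi> x) = Q (\<lambda>k. \<Prod>i\<in>J k. x i)" for x
    unfolding \<phi>_def by (rule Q) simp
  have "\<phi> x \<in> sign_vectors {1..M}" if "x \<in> sign_vectors I" for x
    using prod_sign_vector[OF that sub] unfolding \<phi>_def sign_vectors_def by simp
  then have "\<phi> ` ?S \<subseteq> ?V"
    using Q\<phi> by auto
  then have "card ?S = (\<Sum>v\<in>?V. card {x\<in>?S. \<phi> x = v})"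
    using sum.group[of ?S ?V \<phi> "\<lambda>_. 1::nat"] finite_sign_vectors[OF \<open>finite I\<close>]
      finite_sign_vectors[of "{1..M}"] by simp
  also have "\<dots> = (\<Sum>v\<in>?V. card {x\<in>sign_vectors I. \<forall>k\<in>{1..M}. (\<Prod>i\<in>J k. x i) = v k})"
  proof (rule sum.cong)
    fix v assume v: "v \<in> ?V"
    then have fiber: "\<phi> x = v \<longleftrightarrow> (\<forall>k\<in>{1..M}. (\<Prod>i\<in>J k. x i) = v k)" for x
      unfolding \<phi>_def sign_vectors_def by (auto simp: PiE_iff extensional_def)
    have "Q (\<lambda>k. \<Prod>i\<in>J k. x i)" if "\<forall>k\<in>{1..M}. (\<Prod>i\<in>J k. x i) = v k" for x
      using Q\<phi>[of x] fiber[of x] that v by simp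
    then have "{x\<in>?S. \<phi> x = v} = {x\<in>sign_vectors I. \<forall>k\<in>{1..M}. (\<Prod>i\<in>J k. x i) = v k}"
      using fiber by auto
    then show "card {x\<in>?S. \<phi> x = v} = card {x\<in>sign_vectors I. \<forall>k\<in>{1..M}. (\<Prod>i\<in>J k. x i) = v k}"
      by simp
  qed simp
  finally have "card ?S * 2 ^ M
      = (\<Sum>v\<in>?V. card {x\<in>sign_vectors I. \<forall>k\<in>{1..M}. (\<Prod>i\<in>J k. x i) = v k} * 2 ^ M)"
    by (simp add: sum_distrib_right)
  also have "\<dots> = (\<Sum>v\<in>?V. 2 ^ card I)"
    using assms(1-4) by (intro sum.cong card_triangular_fiber refl) (auto dest: sign_vectors_memD)
  finally show ?thesis
    by simp
qed

lemma card_triangular_pattern_eq: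
  fixes J :: "nat \<Rightarrow> nat set" and pivot :: "nat \<Rightarrow> nat"
  assumes "finite I" "{1..M} \<subseteq> I"
    and sub: "\<And>k. k \<in> {1..M} \<Longrightarrow> J k \<subseteq> I"
    and pivot: "\<And>k. k \<in> {1..M} \<Longrightarrow> pivot k \<in> J k"
    and triangular: "\<And>j k. j \<in> {1..M} \<Longrightarrow> k \<in> {1..M} \<Longrightarrow> j < k \<Longrightarrow> pivot k \<notin> J j"
    and Q: "\<And>v v'. (\<And>k. k \<in> {1..M} \<Longrightarrow> v k = v' k) \<Longrightarrow> Q v = Q v'"
  shows "card {x\<in>sign_vectors I. Q (\<lambda>k. \<Prod>i\<in>J k. x i)} = card {x\<in>sign_vectors I. Q x}"
proof -
  have "card {x\<in>sign_vectors I. Q (\<lambda>k. \<Prod>i\<in>J k. x i)} * 2 ^ M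
      = 2 ^ card I * card {v\<in>sign_vectors {1..M}. Q v}"
    by (rule card_triangular_pattern[OF assms(1) sub pivot triangular Q])
  also have "\<dots> = card {x\<in>sign_vectors I. Q (\<lambda>k. \<Prod>i\<in>{k}. x i)} * 2 ^ M"
    using assms(1,2) by (intro card_triangular_pattern[where pivot = id, symmetric] Q) auto
  finally show ?thesis
    by simp
qed

lemma rademacher_dyadic:
  assumes "real q / 2 ^ k < t" "t < (real q + 1) / 2 ^ k"
  shows "rademacher k t = (-1) ^ q"
proof -
  define \<theta> where "\<theta> = 2 ^ k * t - real q"
  have "0 < \<theta>" "\<theta> < 1"
    using assms by (simp_all add: \<theta>_def field_simps)
  then have "sin (\<theta> * pi) > 0"
    by (intro sin_gt_zero) auto
  moreover have "sin (2 ^ k * pi * t) = (-1) ^ q * sin (\<theta> * pi)"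
  proof -
    have "2 ^ k * pi * t = real q * pi + \<theta> * pi"
      by (simp add: \<theta>_def algebra_simps)
    then show ?thesis
      by (simp add: sin_add)
  qed
  ultimately show ?thesis
    unfolding rademacher_def by (cases "even q") (simp_all add: sgn_mult)
qed

definition dyadic_interval :: "nat \<Rightarrow> nat \<Rightarrow> real set" where
  "dyadic_interval H j = {real j / 2 ^ H <..< (real j + 1) / 2 ^ H}"

text \<open>The value of \<open>r\<^sub>k\<close> on \<open>dyadic_interval H j\<close>: it is \<open>-1\<close> iff the \<open>k\<close>-th binary
  digit of \<open>j / 2\<^sup>H\<close> is \<open>1\<close>.\<close>
definition dyadic_sign :: "nat \<Rightarrow> nat \<Rightarrow> nat \<Rightarrow> real" where
  "dyadic_sign H j = restrict (\<lambda>k. if bit j (H - k) then -1 else 1) {1..H}"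

lemma rademacher_dyadic_interval:
  assumes "t \<in> dyadic_interval H j" "k \<in> {1..H}"
  shows "rademacher k t = dyadic_sign H j k"
proof -
  define d :: nat where "d = 2 ^ (H - k)"
  define q where "q = j div d"
  have "d > 0"
    by (simp add: d_def)
  have H: "(2::real) ^ H = 2 ^ k * real d"
    using assms(2) by (simp add: d_def flip: power_add)
  have "q * d \<le> j" "j + 1 \<le> (q + 1) * d"
    using dividend_less_div_times[OF \<open>d > 0\<close>, of j] unfolding q_def by simp_all
  then have "real q * real d \<le> real j" "real j + 1 \<le> (real q + 1) * real d"
    by (metis of_nat_le_iff of_nat_mult, metis of_nat_1 of_nat_add of_nat_le_iff of_nat_mult)
  moreover have "real j < 2 ^ k * t * real d" "2 ^ k * t * real d < real j + 1"
    using assms(1) \<open>d > 0\<close> unfolding dyadic_interval_def H by (simp_all add: field_simps)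
  ultimately have "real q * real d < 2 ^ k * t * real d" "2 ^ k * t * real d < (real q + 1) * real d"
    by linarith+
  then have "real q < 2 ^ k * t" "2 ^ k * t < real q + 1"
    using \<open>d > 0\<close> by (simp_all only: mult_less_cancel_right_pos of_nat_0_less_iff)
  then have "real q / 2 ^ k < t" "t < (real q + 1) / 2 ^ k"
    by (simp_all add: field_simps)
  then have "rademacher k t = (-1) ^ q"
    by (rule rademacher_dyadic)
  then show ?thesis
    using assms(2) by (simp add: dyadic_sign_def q_def d_def bit_iff_odd)
qed

lemma bit_imp_less_exp: "j < 2 ^ H \<Longrightarrow> bit j i \<Longrightarrow> i < H" for j :: nat
  by (metis bit_take_bit_iff take_bit_nat_eq_self)

lemma bij_betw_dyadic_sign: "bij_betw (dyadic_sign H) {..<2 ^ H} (sign_vectors {1..H})"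
proof -
  have inj: "inj_on (dyadic_sign H) {..<2 ^ H}"
  proof (rule inj_onI)
    fix j j' assume "j \<in> {..<2 ^ H}" "j' \<in> {..<2 ^ H}" and eq: "dyadic_sign H j = dyadic_sign H j'"
    show "j = j'"
    proof (rule bit_eqI)
      fix i
      show "bit j i \<longleftrightarrow> bit j' i"
      proof (cases "i < H")
        case True
        then have "dyadic_sign H j (H - i) = dyadic_sign H j' (H - i)"
          using eq by simp
        then show ?thesis
          using True by (simp add: dyadic_sign_def split: if_splits)
      next
        case False
        then show ?thesis
          using bit_imp_less_exp \<open>j \<in> {..<2 ^ H}\<close> \<open>j' \<in> {..<2 ^ H}\<close> by auto
      qed
    qed
  qed
  moreover have "dyadic_sign H ` {..<2 ^ H} \<subseteq> sign_vectors {1..H}"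
    by (auto simp: dyadic_sign_def sign_vectors_def)
  moreover have "card (dyadic_sign H ` {..<2 ^ H}) = card (sign_vectors {1..H})"
    using inj by (simp add: card_image card_sign_vectors)
  ultimately show ?thesis
    by (simp add: bij_betw_def card_subset_eq finite_sign_vectors)
qed

lemma measure_dyadic_interval: "measure lebesgue (dyadic_interval H j) = 1 / 2 ^ H"
  using measure_completion[of "dyadic_interval H j" lborel]
  by (simp add: dyadic_interval_def field_simps)

lemma disjnt_dyadic_interval:
  assumes "i \<noteq> j"
  shows "disjnt (dyadic_interval H i) (dyadic_interval H j)"
proof -
  have "i = j" if "t \<in> dyadic_interval H i" "t \<in> dyadic_interval H j" for t
  proof -
    have "real i < t * 2 ^ H" "t * 2 ^ H < real i + 1" "real j < t * 2 ^ H" "t * 2 ^ H < real j + 1"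
      using that by (auto simp: dyadic_interval_def field_simps)
    then have "real i < real (Suc j)" "real j < real (Suc i)"
      by simp_all
    then show ?thesis
      unfolding of_nat_less_iff by simp
  qed
  then show ?thesis
    using assms unfolding disjnt_def by blast
qed

lemma dyadic_interval_subset:
  assumes "j < 2 ^ H"
  shows "dyadic_interval H j \<subseteq> {0..1}"
proof
  fix t assume "t \<in> dyadic_interval H j"
  then have "real j / 2 ^ H < t" "t < (real j + 1) / 2 ^ H"
    unfolding dyadic_interval_def by simp_all
  moreover have "real (Suc j) \<le> real (2 ^ H)"
    using assms by (simp only: of_nat_le_iff Suc_le_eq)
  then have "(real j + 1) / 2 ^ H \<le> 1"
    by simp
  moreover have "0 \<le> real j / 2 ^ H"
    by simp
  ultimately show "t \<in> {0..1}"
    unfolding atLeastAtMost_iff by linarith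
qed

lemma dyadic_intervals_cover:
  "{0..1} - (\<lambda>j. real j / 2 ^ H) ` {..2 ^ H} \<subseteq> (\<Union>j<2 ^ H. dyadic_interval H j)"
proof
  fix t assume t: "t \<in> {0..1} - (\<lambda>j. real j / 2 ^ H) ` {..2 ^ H}"
  define j where "j = nat \<lfloor>t * 2 ^ H\<rfloor>"
  have "0 \<le> t * 2 ^ H" "t * 2 ^ H \<le> 2 ^ H"
    using t by simp_all
  then have j: "real j \<le> t * 2 ^ H" "t * 2 ^ H < real j + 1"
    unfolding j_def by linarith+
  have "real j \<noteq> t * 2 ^ H"
  proof
    assume eq: "real j = t * 2 ^ H"
    then have "real j \<le> real (2 ^ H)"
      using \<open>t * 2 ^ H \<le> 2 ^ H\<close> by simp
    then have "j \<in> {..2 ^ H}"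
      by (simp only: of_nat_le_iff atMost_iff)
    moreover have "t = real j / 2 ^ H"
      using eq by (simp add: field_simps)
    ultimately show False
      using t by blast
  qed
  with j have "real j < 2 ^ H"
    using \<open>t * 2 ^ H \<le> 2 ^ H\<close> by linarith
  then have "real j < real (2 ^ H)"
    by simp
  then have "j < 2 ^ H"
    by (simp only: of_nat_less_iff)
  moreover have "t \<in> dyadic_interval H j"
    using j \<open>real j \<noteq> t * 2 ^ H\<close> by (simp add: dyadic_interval_def field_simps)
  ultimately show "t \<in> (\<Union>j<2 ^ H. dyadic_interval H j)"
    by blast
qed

lemma measure_UN_dyadic_interval:
  assumes "finite G"
  shows "(\<Union>j\<in>G. dyadic_interval H j) \<in> lmeasurable"
    and "measure lebesgue (\<Union>j\<in>G. dyadic_interval H j) = card G / 2 ^ H"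
proof -
  have lmeasurable: "dyadic_interval H j \<in> lmeasurable" for j
    by (simp add: dyadic_interval_def)
  then show "(\<Union>j\<in>G. dyadic_interval H j) \<in> lmeasurable"
    using assms by (intro fmeasurable.finite_UN) auto
  show "measure lebesgue (\<Union>j\<in>G. dyadic_interval H j) = card G / 2 ^ H"
    using assms by (subst measure_UNION')
      (auto simp: lmeasurable measure_dyadic_interval disjnt_dyadic_interval pairwise_def)
qed

lemma measure_rademacher_pattern:
  assumes P: "\<And>r r'. (\<And>k. k \<in> {1..H} \<Longrightarrow> r k = r' k) \<Longrightarrow> P r = P r'"
  shows "measure lebesgue {t\<in>{0..1}. P (\<lambda>k. rademacher k t)} = card {x\<in>sign_vectors {1..H}. P x} / 2 ^ H"
proof -
  define G where "G = {j\<in>{..<2 ^ H}. P (dyadic_sign H j)}"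
  define A where "A = {t\<in>{0..1}. P (\<lambda>k. rademacher k t)}"
  define T where "T = (\<Union>j\<in>G. dyadic_interval H j)"
  define D where "D = (\<lambda>j. real j / 2 ^ H) ` {..2 ^ H}"
  have P_dyadic: "P (\<lambda>k. rademacher k t) = P (dyadic_sign H j)" if "t \<in> dyadic_interval H j" for t j
    using rademacher_dyadic_interval[OF that] by (intro P) simp
  have "{x\<in>sign_vectors {1..H}. P x} = dyadic_sign H ` G"
    using bij_betw_dyadic_sign[of H] unfolding G_def bij_betw_def by auto
  moreover have "inj_on (dyadic_sign H) G"
    using bij_betw_imp_inj_on[OF bij_betw_dyadic_sign] unfolding G_def by (rule inj_on_subset) auto
  ultimately have card_G: "card {x\<in>sign_vectors {1..H}. P x} = card G"
    by (simp add: card_image)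
  have "T \<subseteq> A"
  proof
    fix t assume "t \<in> T"
    then obtain j where "j \<in> G" "t \<in> dyadic_interval H j"
      unfolding T_def by blast
    then show "t \<in> A"
      using dyadic_interval_subset[of j H] P_dyadic unfolding A_def G_def by auto
  qed
  moreover have "A - T \<subseteq> D"
  proof
    fix t assume t: "t \<in> A - T"
    show "t \<in> D"
    proof (rule ccontr)
      assume "t \<notin> D"
      then obtain j where "j < 2 ^ H" "t \<in> dyadic_interval H j"
        using dyadic_intervals_cover[of H] t unfolding A_def D_def by blast
      then have "j \<in> G"
        using t P_dyadic unfolding A_def G_def by auto
      then show False
        using t \<open>t \<in> dyadic_interval H j\<close> unfolding T_def by blast
    qed
  qed
  ultimately have "T - A \<union> (A - T) \<subseteq> D"
    by (simp add: Diff_eq_empty_iff[THEN iffD2])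
  then have "negligible (T - A \<union> (A - T))"
    using negligible_finite negligible_subset unfolding D_def by blast
  moreover have "finite G"
    by (simp add: G_def)
  ultimately have "measure lebesgue A = card G / 2 ^ H"
    unfolding T_def by (metis measure_UN_dyadic_interval measure_negligible_symdiff)
  then show ?thesis
    using card_G unfolding A_def by simp
qed

definition walsh_factors :: "nat \<Rightarrow> nat set" where
  "walsh_factors n = Suc ` {i. bit n i}"

lemma walsh_eq_prod_rademacher: "walsh n t = (\<Prod>j\<in>walsh_factors n. rademacher j t)"
proof -
  have "{i\<in>{..<n}. bit n i} = {i. bit n i}"
    using bit_imp_less_exp[of n n] less_exp[of n] by auto
  then have "walsh n t = (\<Prod>i\<in>{i. bit n i}. rademacher (Suc i) t)"
    unfolding walsh_def bit_iff_odd[symmetric] by (simp add: prod.inter_filter[symmetric])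
  then show ?thesis
    unfolding walsh_factors_def by (simp add: prod.reindex)
qed

lemma walsh_factors_subset: "walsh_factors n \<subseteq> {1..Suc (floor_log n)}"
  using bit_imp_less_exp[OF floor_log_exp2_gt[of n, simplified mult_2 power_Suc[symmetric]]]
  by (auto simp: walsh_factors_def less_Suc_eq_le)

lemma floor_log_mem_walsh_factors:
  assumes "n > 0"
  shows "Suc (floor_log n) \<in> walsh_factors n"
proof -
  have "n div 2 ^ floor_log n = 1"
    using floor_log_exp2_le[OF assms] floor_log_exp2_gt[of n] by (intro div_nat_eqI) auto
  then show ?thesis
    unfolding walsh_factors_def bit_iff_odd by simp
qed

lemma lacunary_floor_log_less:
  assumes "q \<ge> 2" "lacunary q n" "1 \<le> j" "j < k"
  shows "floor_log (n j) < floor_log (n k)"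
proof (rule lift_Suc_mono_less_ivl[where f = "\<lambda>k. floor_log (n k)" and N = "{1..}", OF _ \<open>j < k\<close>])
  fix i :: nat assume "i \<in> {1..}"
  then have "n i > 0" "q * real (n i) \<le> real (n (Suc i))"
    using assms(2) unfolding lacunary_def by (auto simp: pos_le_divide_eq)
  moreover have "2 * real (n i) \<le> q * real (n i)"
    using assms(1) by (intro mult_right_mono) auto
  ultimately have "2 * n i \<le> n (Suc i)"
    by linarith
  then have "floor_log (2 * n i) \<le> floor_log (n (Suc i))"
    by (rule floor_log_le_iff)
  then show "floor_log (n i) < floor_log (n (Suc i))"
    using \<open>n i > 0\<close> by simp
qed (use \<open>1 \<le> j\<close> in auto)

lemma lacunary_walsh_factors_triangular:
  assumes "q \<ge> 2" "lacunary q n" "1 \<le> j" "j < k"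
  shows "Suc (floor_log (n k)) \<notin> walsh_factors (n j)"
  using walsh_factors_subset[of "n j"] lacunary_floor_log_less[OF assms] by auto

lemma measure_walsh_pattern:
  assumes sub: "\<And>k. k \<in> {1..M} \<Longrightarrow> walsh_factors (n k) \<subseteq> {1..H}"
    and Q: "\<And>v v'. (\<And>k. k \<in> {1..M} \<Longrightarrow> v k = v' k) \<Longrightarrow> Q v = Q v'"
  shows "measure lebesgue {t\<in>{0..1}. Q (\<lambda>k. walsh (n k) t)}
       = card {x\<in>sign_vectors {1..H}. Q (\<lambda>k. \<Prod>i\<in>walsh_factors (n k). x i)} / 2 ^ H"
  unfolding walsh_eq_prod_rademacher
proof (rule measure_rademacher_pattern[where P = "\<lambda>x. Q (\<lambda>k. \<Prod>i\<in>walsh_factors (n k). x i)"])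
  fix r r' :: "nat \<Rightarrow> real" assume "\<And>i. i \<in> {1..H} \<Longrightarrow> r i = r' i"
  then show "Q (\<lambda>k. \<Prod>i\<in>walsh_factors (n k). r i) = Q (\<lambda>k. \<Prod>i\<in>walsh_factors (n k). r' i)"
    using sub by (intro Q prod.cong) (auto simp: subset_iff)
qed

theorem lemma3p4:
  fixes q :: real and n :: "nat \<Rightarrow> nat" and a :: "nat \<Rightarrow> real" and M :: nat and lam :: real
  assumes "q \<ge> 2" and "lacunary q n" and "M \<ge> 1" and "lam > 0"
  shows "measure lebesgue {t \<in> {0..1}. \<bar>\<Sum>k=1..M. a k * rademacher k t\<bar> > lam}
       = measure lebesgue {t \<in> {0..1}. \<bar>\<Sum>k=1..M. a k * walsh (n k) t\<bar> > lam}"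
proof -
  define Q where "Q v \<longleftrightarrow> \<bar>\<Sum>k=1..M. a k * v k\<bar> > lam" for v :: "nat \<Rightarrow> real"
  define lead where "lead k = Suc (floor_log (n k))" for k
  define H where "H = max M (lead M)"
  have Q: "Q v = Q v'" if "\<And>k. k \<in> {1..M} \<Longrightarrow> v k = v' k" for v v'
    unfolding Q_def using that by (metis (no_types, lifting) sum.cong)
  have lead: "lead k \<in> walsh_factors (n k)" if "k \<in> {1..M}" for k
    using floor_log_mem_walsh_factors assms(2) that unfolding lead_def lacunary_def by auto
  have factors_H: "walsh_factors (n k) \<subseteq> {1..H}" if "k \<in> {1..M}" for k
  proof -
    have "lead k \<le> lead M"
      using lacunary_floor_log_less[OF assms(1,2), of k M] that unfolding lead_def by (cases "k = M") auto
    then show ?thesis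
      using walsh_factors_subset[of "n k"] unfolding H_def lead_def by fastforce
  qed
  have "{1..M} \<subseteq> {1..H}"
    unfolding H_def by auto
  have "measure lebesgue {t \<in> {0..1}. Q (\<lambda>k. rademacher k t)} = card {x\<in>sign_vectors {1..H}. Q x} / 2 ^ H"
    using \<open>{1..M} \<subseteq> {1..H}\<close> by (intro measure_rademacher_pattern Q) auto
  also have "\<dots> = card {x\<in>sign_vectors {1..H}. Q (\<lambda>k. \<Prod>i\<in>walsh_factors (n k). x i)} / 2 ^ H"
    using card_triangular_pattern_eq[where J = "\<lambda>k. walsh_factors (n k)" and pivot = lead and Q = Q,
        OF _ \<open>{1..M} \<subseteq> {1..H}\<close> factors_H lead _ Q]
      lacunary_walsh_factors_triangular[OF assms(1,2)]
    by (simp add: lead_def)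
  also have "\<dots> = measure lebesgue {t \<in> {0..1}. Q (\<lambda>k. walsh (n k) t)}"
    by (rule measure_walsh_pattern[symmetric, OF factors_H Q])
  finally show ?thesis
    unfolding Q_def .
qed

end
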